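(* In the setting described in the context, let $p$ be a prime, $k\ge1$ an integer, $1\le j\le r$, and $n_0,\dots,n_{j-1}\in\mathbb Z$ such that $\big(u_j+\sum_{i=0}^{j-1}n_iu_i\big)h'\in p^kL$. Then $p^k$ divides the integer $c_{jj0}$, and therefore $p^k$ divides $\lambda$.
   Context: Let $\mathbb K$ be a number field of degree $d=r+2\ge2$ with exactly one pair of complex conjugate embeddings; order its embeddings $\sigma_1,\dots,\sigma_r$ (real), $\sigma_{\mathbb C}$, $\overline{\sigma_{\mathbb C}}$; a $\mathbb Q$-basis $(e_0,\dots,e_{r+1})$ of $\mathbb K$ is positive if $i\cdot\det(\sigma_j(e_{k-1}))_{1\le j,k\le d}>0$. Let $\mathfrak f\ne\mathcal O_{\mathbb K}$ be an integral ideal, $q\mathbb Z=\mathfrak f\cap\mathbb Z$, $\mathfrak b$ an integral ideal coprime to $\mathfrak f$, $L=\mathfrak f\mathfrak b^{-1}$, $\mathfrak a$ an integral ideal coprime to $\mathfrak f\mathfrak b$ with $\mathfrak a^{-1}L/L$ cyclic, $N=\mathcal N(\mathfrak a)$; $h\in L$ is admissible if $h/q-1\in L$ and $h/N$ generates $\mathfrak a^{-1}L/L$. Let $\mathcal O^{+,\times}_{\mathfrak f}$ be the group of units $\equiv1\bmod\mathfrak f$ positive at all real embeddings, $u_1,\dots,u_r\in\mathcal O^{+,\times}_{\mathfrak f}$ with $1,u_1,\dots,u_r$ linearly independent over $\mathbb Q$, $u_0=1$. Let $h=mh'\in L$ be admissible with $m\in\mathbb Z_{>0}$ and $h'$ primitive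 in $L$. Fix a positive $\mathbb Z$-basis $(e_0=h',e_1,\dots,e_{r+1})$ of $L$ such that $u_ih'=\sum_{k=0}^ic_{ik0}e_k$ with $c_{ik0}\in\mathbb Z$ and $c_{ii0}>0$ for $1\le i\le r$, and put $\lambda=\prod_{i=1}^rc_{ii0}$. *)

theory Defs
  imports "HOL-Computational_Algebra.Polynomial"
begin

definition alg_int :: "'k::field_char_0 \<Rightarrow> bool" where
  "alg_int x \<longleftrightarrow> (\<exists>P::int poly. lead_coeff P = 1 \<and> poly (map_poly of_int P) x = 0)"

definition alg_unit :: "'k::field_char_0 \<Rightarrow> bool" where
  "alg_unit x \<longleftrightarrow> x \<noteq> 0 \<and> alg_int x \<and> alg_int (inverse x)"

definition is_Q_basis :: "(nat \<Rightarrow> 'k::field_char_0) \<Rightarrow> nat \<Rightarrow> bool" where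
  "is_Q_basis e d \<longleftrightarrow>
     (\<forall>x. \<exists>!a::nat \<Rightarrow> rat. (\<forall>k\<ge>d. a k = 0) \<and> x = (\<Sum>k<d. of_rat (a k) * e k))"

definition Q_lin_indep :: "(nat \<Rightarrow> 'k::field_char_0) \<Rightarrow> nat \<Rightarrow> bool" where
  "Q_lin_indep v n \<longleftrightarrow>
     (\<forall>a::nat \<Rightarrow> rat. (\<Sum>i<n. of_rat (a i) * v i) = 0 \<longrightarrow> (\<forall>i<n. a i = 0))"

definition int_span :: "(nat \<Rightarrow> 'k::field_char_0) \<Rightarrow> nat \<Rightarrow> 'k set" where
  "int_span e d = {(\<Sum>k<d. of_int (a k) * e k) | a::nat \<Rightarrow> int. True}"

definition scale_set :: "'k::field_char_0 \<Rightarrow> 'k set \<Rightarrow> 'k set" where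
  "scale_set t L = {t * y | y. y \<in> L}"

end

theory Submission
  imports Defs
begin

text \<open>The hypothesis says that an integer combination of the rows of the lower triangular
  integer matrix (c i l), the row of u 0 = 1 being (1, 0, 0, ...), lies in p^k L.
  Its e j-coordinate is c j j, because the rows i < j vanish from column j on; and since the
  coordinates with respect to the basis e are unique, every coordinate of an element of
  p^k L is divisible by p^k.\<close>

lemma is_Q_basis_int_coeffs_eq:
  assumes basis: "is_Q_basis e d"
    and eq: "(\<Sum>l<d. of_int (a l) * e l) = (\<Sum>l<d. of_int (b l) * e l)"
    and "l < d"
  shows "a l = b l"
proof -
  define A :: "nat \<Rightarrow> rat" where "A l = (if l < d then of_int (a l) else 0)" for l
  define B :: "nat \<Rightarrow> rat" where "B l = (if l < d then of_int (b l) else 0)" for l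
  have "(\<Sum>l<d. of_rat (A l) * e l) = (\<Sum>l<d. of_rat (B l) * e l)"
    using eq by (simp add: A_def B_def)
  moreover have "\<forall>x. \<exists>!a::nat \<Rightarrow> rat. (\<forall>k\<ge>d. a k = 0) \<and> x = (\<Sum>k<d. of_rat (a k) * e k)"
    using basis unfolding is_Q_basis_def .
  ultimately have "A = B"
    by (metis (no_types, lifting) A_def B_def not_le)
  then show ?thesis
    using \<open>l < d\<close> by (metis A_def B_def of_int_eq_iff)
qed

lemma int_span_scale_coeff_dvd:
  assumes basis: "is_Q_basis e d"
    and mem: "(\<Sum>l<d. of_int (b l) * e l) \<in> scale_set (of_int m) (int_span e d)"
    and "l < d"
  shows "m dvd b l"
proof -
  obtain a where "(\<Sum>l<d. of_int (b l) * e l) = of_int m * (\<Sum>l<d. of_int (a l) * e l)"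
    using mem unfolding scale_set_def int_span_def by auto
  also have "\<dots> = (\<Sum>l<d. of_int (m * a l) * e l)"
    by (simp add: sum_distrib_left mult.assoc)
  finally have "b l = m * a l"
    by (rule is_Q_basis_int_coeffs_eq[OF basis _ \<open>l < d\<close>])
  then show ?thesis by simp
qed

lemma int_combination_coeffs:
  fixes e :: "nat \<Rightarrow> 'a::comm_ring_1"
  assumes "\<And>i. i \<in> I \<Longrightarrow> v i = (\<Sum>l<d. of_int (C i l) * e l)"
  shows "(\<Sum>i\<in>I. of_int (n i) * v i) = (\<Sum>l<d. of_int (\<Sum>i\<in>I. n i * C i l) * e l)"
proof -
  have "(\<Sum>i\<in>I. of_int (n i) * v i) = (\<Sum>i\<in>I. \<Sum>l<d. of_int (n i * C i l) * e l)"
    using assms by (simp add: sum_distrib_left mult.assoc)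
  also have "\<dots> = (\<Sum>l<d. of_int (\<Sum>i\<in>I. n i * C i l) * e l)"
    by (subst sum.swap) (simp add: sum_distrib_right)
  finally show ?thesis .
qed

lemma sum_lessThan_eq_sum_atMost:
  fixes i d :: nat
  assumes "i < d" and "\<And>l. i < l \<Longrightarrow> g l = 0"
  shows "(\<Sum>l<d. g l) = (\<Sum>l\<le>i. g l)"
  using assms by (intro sum.mono_neutral_right) auto

theorem lemma17:
  fixes r :: nat
    and L :: "'k::field_char_0 set"
    and e :: "nat \<Rightarrow> 'k"
    and u :: "nat \<Rightarrow> 'k"
    and h' :: 'k
    and c :: "nat \<Rightarrow> nat \<Rightarrow> int"
    and p :: int and k :: nat and j :: nat
    and n :: "nat \<Rightarrow> int"
  assumes Kbasis: "is_Q_basis e (r + 2)"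
    and L_def: "L = int_span e (r + 2)"
    and L_module: "\<And>a x. alg_int a \<Longrightarrow> x \<in> L \<Longrightarrow> a * x \<in> L"
    and e0: "e 0 = h'"
    and u0: "u 0 = 1"
    and units: "\<And>i. 1 \<le> i \<Longrightarrow> i \<le> r \<Longrightarrow> alg_unit (u i)"
    and indep: "Q_lin_indep u (r + 1)"
    and expand: "\<And>i. 1 \<le> i \<Longrightarrow> i \<le> r \<Longrightarrow> u i * h' = (\<Sum>l\<le>i. of_int (c i l) * e l)"
    and cpos: "\<And>i. 1 \<le> i \<Longrightarrow> i \<le> r \<Longrightarrow> c i i > 0"
    and p: "prime p" and k: "k \<ge> 1" and j: "1 \<le> j" "j \<le> r"
    and hyp: "(u j + (\<Sum>i<j. of_int (n i) * u i)) * h' \<in> scale_set (of_int (p ^ k)) L"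
  shows "p ^ k dvd c j j \<and> p ^ k dvd (\<Prod>i=1..r. c i i)"
proof -
  define C where "C i l = (if l \<le> i then if i = 0 then 1 else c i l else 0)" for i l
  have rows: "u i * h' = (\<Sum>l<r + 2. of_int (C i l) * e l)" if "i \<le> r" for i
  proof -
    have "(\<Sum>l<r + 2. of_int (C i l) * e l) = (\<Sum>l\<le>i. of_int (C i l) * e l)"
      using that by (intro sum_lessThan_eq_sum_atMost) (auto simp: C_def)
    also have "\<dots> = u i * h'"
      using expand[of i] that u0 e0 by (cases "i = 0") (simp_all add: C_def)
    finally show ?thesis by simp
  qed
  have "(u j + (\<Sum>i<j. of_int (n i) * u i)) * h'
      = u j * h' + (\<Sum>i<j. of_int (n i) * (u i * h'))"
    by (simp add: distrib_right sum_distrib_right mult.assoc)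
  also have "(\<Sum>i<j. of_int (n i) * (u i * h')) = (\<Sum>l<r + 2. of_int (\<Sum>i<j. n i * C i l) * e l)"
    using rows j by (intro int_combination_coeffs) simp
  also have "u j * h' + (\<Sum>l<r + 2. of_int (\<Sum>i<j. n i * C i l) * e l)
      = (\<Sum>l<r + 2. of_int (C j l + (\<Sum>i<j. n i * C i l)) * e l)"
    using rows j by (simp only: sum.distrib[symmetric] distrib_right of_int_add)
  finally have "(\<Sum>l<r + 2. of_int (C j l + (\<Sum>i<j. n i * C i l)) * e l)
      \<in> scale_set (of_int (p ^ k)) (int_span e (r + 2))"
    using hyp L_def by metis
  then have "p ^ k dvd C j j + (\<Sum>i<j. n i * C i j)"
    by (rule int_span_scale_coeff_dvd[OF Kbasis]) (use j in simp)
  moreover have "C j j + (\<Sum>i<j. n i * C i j) = c j j"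
    using j by (simp add: C_def)
  ultimately have "p ^ k dvd c j j" by simp
  moreover have "c j j dvd (\<Prod>i=1..r. c i i)"
    using j by (intro dvd_prodI) auto
  ultimately show ?thesis using dvd_trans by blast
qed

end
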